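(* For all integers $m,n\geq 1$, \[p^{ed}_{od}(m,2n)-p^{ed}_{od}(m,2n-1)=-D_o(m,2n-1).\]
   Context: $\mathcal{P}^{ed}_{od}$ is the set of integer partitions such that: - all parts are distinct; - every odd part is smaller than every even part; - at least one odd part appears. $p^{ed}_{od}(m,n)$ is the number of partitions of $n$ in $\mathcal{P}^{ed}_{od}$ with exactly $m$ parts. $D_o(m,n)$ is the number of partitions of $n$ into exactly $m$ distinct odd parts. *)

theory Defs
  imports Main
begin

text \<open>A partition into distinct parts is represented by its (finite) set of parts,
all positive, summing to n.\<close>

definition distinct_partitions :: "nat \<Rightarrow> nat set set" where
  "distinct_partitions n = {P. finite P \<and> (\<forall>x\<in>P. x > 0) \<and> \<Sum>P = n}"

definition P_ed_od :: "nat set \<Rightarrow> bool" where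
  "P_ed_od P \<longleftrightarrow> (\<forall>a\<in>P. \<forall>b\<in>P. odd a \<and> even b \<longrightarrow> a < b) \<and> (\<exists>a\<in>P. odd a)"

definition p_ed_od :: "nat \<Rightarrow> nat \<Rightarrow> nat" where
  "p_ed_od m n = card {P \<in> distinct_partitions n. P_ed_od P \<and> card P = m}"

definition D_o :: "nat \<Rightarrow> nat \<Rightarrow> nat" where
  "D_o m n = card {P \<in> distinct_partitions n. (\<forall>x\<in>P. odd x) \<and> card P = m}"

end

theory Submission
  imports Defs
begin

text \<open>Replacing the smallest even part e of a partition of N by e + 1 gives a partition of
N + 1 with the same number of parts in which e + 1 is the largest odd part; the ordering
"odds below evens" guarantees that e + 1 was not already a part and that it is still respected.
The inverse replaces the largest odd part q by q - 1, which is possible exactly when there is a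
second, smaller odd part. This matches the partitions of N with an even part bijectively with
the partitions of N + 1 having two odd parts. When N + 1 is even the number of odd parts is
even, so every partition in the class has two of them, while the partitions of N without
even parts are those counted by D_o.\<close>

definition smallest_even :: "nat set \<Rightarrow> nat" where
  "smallest_even P = Min {x \<in> P. even x}"

definition largest_odd :: "nat set \<Rightarrow> nat" where
  "largest_odd Q = Max {x \<in> Q. odd x}"

definition raise_even :: "nat set \<Rightarrow> nat set" where
  "raise_even P = insert (smallest_even P + 1) (P - {smallest_even P})"

definition lower_odd :: "nat set \<Rightarrow> nat set" where
  "lower_odd Q = insert (largest_odd Q - 1) (Q - {largest_odd Q})"

definition two_odd_parts :: "nat set \<Rightarrow> bool" where
  "two_odd_parts Q \<longleftrightarrow> (\<exists>a\<in>Q. \<exists>b\<in>Q. a < b \<and> odd a \<and> odd b)"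

lemma sum_insert_Diff_singleton:
  fixes A :: "'a::comm_monoid_add set"
  assumes "finite A" "a \<in> A" "b \<notin> A"
  shows "\<Sum>(insert b (A - {a})) + a = \<Sum>A + b"
  using assms by (simp add: sum.remove add_ac)

lemma card_insert_Diff_singleton:
  assumes "finite A" "a \<in> A" "b \<notin> A"
  shows "card (insert b (A - {a})) = card A"
proof -
  have "card A = Suc (card (A - {a}))" using assms(1,2) by (rule card.remove)
  then show ?thesis using assms by simp
qed

lemma finite_distinct_partitions: "finite (distinct_partitions n)"
proof (rule finite_subset)
  show "distinct_partitions n \<subseteq> Pow {..n}"
    by (auto simp: distinct_partitions_def intro: member_le_sum[where f = id, simplified])
qed simp

lemma smallest_even:
  assumes "finite P" "x \<in> P" "even x"
  shows "smallest_even P \<in> P" "even (smallest_even P)"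
    and "\<And>y. y \<in> P \<Longrightarrow> even y \<Longrightarrow> smallest_even P \<le> y"
proof -
  have "{x \<in> P. even x} \<noteq> {}" "finite {x \<in> P. even x}" using assms by auto
  then show "smallest_even P \<in> P" "even (smallest_even P)"
    "\<And>y. y \<in> P \<Longrightarrow> even y \<Longrightarrow> smallest_even P \<le> y"
    unfolding smallest_even_def using Min_in Min_le by auto
qed

lemma largest_odd:
  assumes "finite Q" "x \<in> Q" "odd x"
  shows "largest_odd Q \<in> Q" "odd (largest_odd Q)"
    and "\<And>y. y \<in> Q \<Longrightarrow> odd y \<Longrightarrow> y \<le> largest_odd Q"
proof -
  have "{x \<in> Q. odd x} \<noteq> {}" "finite {x \<in> Q. odd x}" using assms by auto
  then show "largest_odd Q \<in> Q" "odd (largest_odd Q)"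
    "\<And>y. y \<in> Q \<Longrightarrow> odd y \<Longrightarrow> y \<le> largest_odd Q"
    unfolding largest_odd_def using Max_in Max_ge by auto
qed

lemma even_sum_imp_two_odd_parts:
  assumes "finite Q" "even (\<Sum>Q)" "x \<in> Q" "odd x"
  shows "two_odd_parts Q"
proof -
  define q where "q = largest_odd Q"
  have q: "q \<in> Q" "odd q" "\<And>y. y \<in> Q \<Longrightarrow> odd y \<Longrightarrow> y \<le> q"
    using largest_odd[OF assms(1,3,4)] unfolding q_def by auto
  have "\<not> (\<forall>y\<in>Q - {q}. even y)"
  proof
    assume "\<forall>y\<in>Q - {q}. even y"
    then have "even (\<Sum>(Q - {q}))" by (intro dvd_sum) auto
    moreover have "\<Sum>Q = q + \<Sum>(Q - {q})" using assms(1) q(1) by (simp add: sum.remove)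
    ultimately show False using assms(2) q(2) by simp
  qed
  then obtain a where "a \<in> Q" "a \<noteq> q" "odd a" by auto
  with q show ?thesis unfolding two_odd_parts_def by (meson le_neq_implies_less)
qed

lemma P_ed_od_if_all_odd: "P \<noteq> {} \<Longrightarrow> \<forall>x\<in>P. odd x \<Longrightarrow> P_ed_od P"
  by (auto simp: P_ed_od_def)

lemma raise_even_partition:
  assumes P: "P \<in> distinct_partitions N" "P_ed_od P" and x: "x \<in> P" "even x"
  shows "raise_even P \<in> distinct_partitions (Suc N)" "P_ed_od (raise_even P)"
    "card (raise_even P) = card P" "two_odd_parts (raise_even P)"
    "lower_odd (raise_even P) = P"
proof -
  define e where "e = smallest_even P"
  have fin: "finite P" and pos: "\<forall>x\<in>P. x > 0" and sum: "\<Sum>P = N"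
    using P(1) by (auto simp: distinct_partitions_def)
  have ord: "\<And>a b. a \<in> P \<Longrightarrow> b \<in> P \<Longrightarrow> odd a \<Longrightarrow> even b \<Longrightarrow> a < b"
    using P(2) by (auto simp: P_ed_od_def)
  obtain a where a: "a \<in> P" "odd a" using P(2) by (auto simp: P_ed_od_def)
  have e: "e \<in> P" "even e" "\<And>y. y \<in> P \<Longrightarrow> even y \<Longrightarrow> e \<le> y"
    using smallest_even[OF fin x] unfolding e_def by auto
  have new: "e + 1 \<notin> P" using ord e(1,2) by fastforce
  have R: "raise_even P = insert (e + 1) (P - {e})" unfolding raise_even_def e_def ..
  show "raise_even P \<in> distinct_partitions (Suc N)"
    using sum_insert_Diff_singleton[OF fin e(1) new] fin pos sum
    unfolding R by (auto simp: distinct_partitions_def)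
  show "card (raise_even P) = card P"
    unfolding R using card_insert_Diff_singleton[OF fin e(1) new] .
  have "odd c \<Longrightarrow> even b \<Longrightarrow> c \<in> raise_even P \<Longrightarrow> b \<in> raise_even P \<Longrightarrow> c < b" for b c
  proof -
    assume cb: "odd c" "even b" "c \<in> raise_even P" "b \<in> raise_even P"
    then have "b \<in> P" "b \<noteq> e" using R e(2) by auto
    moreover from this have "e \<le> b" using e(3) cb(2) by blast
    ultimately have "e + 2 \<le> b" using e(2) cb(2) by presburger
    with cb ord \<open>b \<in> P\<close> R show "c < b" by (cases "c = e + 1") auto
  qed
  then show "P_ed_od (raise_even P)" using e(2) R by (auto simp: P_ed_od_def)
  have "a < e" using ord a e by blast
  then show "two_odd_parts (raise_even P)"
    using a e(2) R unfolding two_odd_parts_def by (intro bexI[of _ a] bexI[of _ "e + 1"]) auto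
  have "largest_odd (raise_even P) = e + 1"
    unfolding largest_odd_def R using fin e(2) ord[OF _ e(1)] by (intro Max_eqI) fastforce+
  then show "lower_odd (raise_even P) = P" unfolding lower_odd_def using R new e(1) by auto
qed

lemma lower_odd_partition:
  assumes Q: "Q \<in> distinct_partitions (Suc N)" "P_ed_od Q" "two_odd_parts Q"
  shows "lower_odd Q \<in> distinct_partitions N" "P_ed_od (lower_odd Q)"
    "card (lower_odd Q) = card Q" "\<exists>x\<in>lower_odd Q. even x"
    "raise_even (lower_odd Q) = Q"
proof -
  define q where "q = largest_odd Q"
  have fin: "finite Q" and pos: "\<forall>x\<in>Q. x > 0" and sum: "\<Sum>Q = Suc N"
    using Q(1) by (auto simp: distinct_partitions_def)
  have ord: "\<And>a b. a \<in> Q \<Longrightarrow> b \<in> Q \<Longrightarrow> odd a \<Longrightarrow> even b \<Longrightarrow> a < b"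
    using Q(2) by (auto simp: P_ed_od_def)
  obtain a b where ab: "a \<in> Q" "b \<in> Q" "a < b" "odd a" "odd b"
    using Q(3) by (auto simp: two_odd_parts_def)
  have q: "q \<in> Q" "odd q" "\<And>y. y \<in> Q \<Longrightarrow> odd y \<Longrightarrow> y \<le> q"
    using largest_odd[OF fin ab(2,5)] unfolding q_def by auto
  have "a + 2 \<le> q" using q(3)[OF ab(2,5)] ab(3,4,5) q(2) by presburger
  then have q3: "q \<ge> 3" using odd_pos[OF ab(4)] by linarith
  have new: "q - 1 \<notin> Q" using ord[OF q(1)] q(2) q3 by fastforce
  have L: "lower_odd Q = insert (q - 1) (Q - {q})" unfolding lower_odd_def q_def ..
  show "lower_odd Q \<in> distinct_partitions N"
    using sum_insert_Diff_singleton[OF fin q(1) new] fin pos sum q3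
    unfolding L by (auto simp: distinct_partitions_def)
  show "card (lower_odd Q) = card Q"
    unfolding L using card_insert_Diff_singleton[OF fin q(1) new] .
  have "odd c \<Longrightarrow> even d \<Longrightarrow> c \<in> lower_odd Q \<Longrightarrow> d \<in> lower_odd Q \<Longrightarrow> c < d" for c d
  proof -
    assume cd: "odd c" "even d" "c \<in> lower_odd Q" "d \<in> lower_odd Q"
    then have "c \<in> Q" "c \<noteq> q" using L q(2) q3 by auto
    moreover from this have "c \<le> q" using q(3) cd(1) by blast
    ultimately have "c + 2 \<le> q" using q(2) cd(1) by presburger
    with cd ord \<open>c \<in> Q\<close> L show "c < d" by (cases "d = q - 1") auto
  qed
  moreover have "a \<in> lower_odd Q" using L ab(1) \<open>a + 2 \<le> q\<close> by auto
  ultimately show "P_ed_od (lower_odd Q)" using ab(4) by (auto simp: P_ed_od_def)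
  show "\<exists>x\<in>lower_odd Q. even x" using L q(2) q3 by auto
  have "smallest_even (lower_odd Q) = q - 1"
    unfolding smallest_even_def L using fin q(2) q3 ord[OF q(1)] by (intro Min_eqI) fastforce+
  then show "raise_even (lower_odd Q) = Q" unfolding raise_even_def using L new q(1) q3 by auto
qed

lemma bij_betw_raise_even:
  "bij_betw raise_even
     {P \<in> distinct_partitions N. P_ed_od P \<and> card P = m \<and> (\<exists>x\<in>P. even x)}
     {Q \<in> distinct_partitions (Suc N). P_ed_od Q \<and> card Q = m \<and> two_odd_parts Q}"
proof (rule bij_betw_byWitness[where f' = lower_odd])
  show "raise_even ` {P \<in> distinct_partitions N. P_ed_od P \<and> card P = m \<and> (\<exists>x\<in>P. even x)}
    \<subseteq> {Q \<in> distinct_partitions (Suc N). P_ed_od Q \<and> card Q = m \<and> two_odd_parts Q}"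
    by (auto dest: raise_even_partition(1-4))
  show "lower_odd ` {Q \<in> distinct_partitions (Suc N). P_ed_od Q \<and> card Q = m \<and> two_odd_parts Q}
    \<subseteq> {P \<in> distinct_partitions N. P_ed_od P \<and> card P = m \<and> (\<exists>x\<in>P. even x)}"
    by (auto dest: lower_odd_partition(1-4))
qed (auto dest: raise_even_partition(5) lower_odd_partition(5))

lemma p_ed_od_eq_D_o_add:
  assumes "m \<ge> 1"
  shows "p_ed_od m N = D_o m N
    + card {P \<in> distinct_partitions N. P_ed_od P \<and> card P = m \<and> (\<exists>x\<in>P. even x)}"
proof -
  let ?odd = "{P \<in> distinct_partitions N. (\<forall>x\<in>P. odd x) \<and> card P = m}"
  let ?even = "{P \<in> distinct_partitions N. P_ed_od P \<and> card P = m \<and> (\<exists>x\<in>P. even x)}"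
  have "P_ed_od P" if "P \<in> ?odd" for P
  proof (rule P_ed_od_if_all_odd)
    show "P \<noteq> {}" using that assms by (intro notI) simp
    show "\<forall>x\<in>P. odd x" using that by simp
  qed
  then have "{P \<in> distinct_partitions N. P_ed_od P \<and> card P = m} = ?odd \<union> ?even"
    by blast
  moreover have "?odd \<inter> ?even = {}" by blast
  moreover have "finite ?odd" "finite ?even" by (simp_all add: finite_distinct_partitions)
  ultimately show ?thesis unfolding p_ed_od_def D_o_def by (simp add: card_Un_disjoint)
qed

lemma p_ed_od_eq_two_odd_parts:
  assumes "even n"
  shows "p_ed_od m n
    = card {Q \<in> distinct_partitions n. P_ed_od Q \<and> card Q = m \<and> two_odd_parts Q}"
proof -
  have "two_odd_parts Q" if "Q \<in> distinct_partitions n" "P_ed_od Q" for Q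
    using that assms even_sum_imp_two_odd_parts
    unfolding distinct_partitions_def P_ed_od_def by blast
  then show ?thesis unfolding p_ed_od_def by meson
qed

theorem mainTheorem6:
  fixes m n :: nat
  assumes "m \<ge> 1" and "n \<ge> 1"
  shows "int (p_ed_od m (2*n)) - int (p_ed_od m (2*n - 1)) = - int (D_o m (2*n - 1))"
proof -
  define N where "N = 2*n - 1"
  have "Suc N = 2*n" using assms(2) unfolding N_def by simp
  then have "p_ed_od m (2*n)
      = card {Q \<in> distinct_partitions (Suc N). P_ed_od Q \<and> card Q = m \<and> two_odd_parts Q}"
    by (simp add: p_ed_od_eq_two_odd_parts)
  also have "\<dots> = card {P \<in> distinct_partitions N. P_ed_od P \<and> card P = m \<and> (\<exists>x\<in>P. even x)}"
    using bij_betw_same_card[OF bij_betw_raise_even] by simp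
  finally have "p_ed_od m N = D_o m N + p_ed_od m (2*n)"
    using p_ed_od_eq_D_o_add[OF assms(1)] by simp
  then show ?thesis unfolding N_def by simp
qed

end
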